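(* Let $V$ be a vertex operator superalgebra and $g$ an automorphism of $V$ of finite order. If $M$ is a simple $g\sigma$-twisted $V$-module, then $g\circ M\cong M$. In particular, every simple (untwisted) $V$-module $M$ satisfies $\sigma\circ M\cong M$.
   Context: A vertex operator superalgebra (VOSA) $V=V_{\bar0}\oplus V_{\bar1}$ has the following structure. - Vertex operators $Y(v,z)=\sum v(n)z^{-n-1}$, vacuum $\mathbf1$, and conformal vector $\omega$ with $Y(\omega,z)=\sum L(n)z^{-n-2}$. - The super Jacobi identity holds with sign $\epsilon_{u,v}=(-1)^{\tilde u\tilde v}$. - $V=\bigoplus_{n\in\frac12\mathbb Z}V_n$ by $L(0)$-weight, with $V_{\bar0}$ integral and $V_{\bar1}$ half-integral weights. Automorphisms fix $\mathbf1,\omega$ and satisfy $gY(v,z)g^{-1}=Y(gv,z)$. $\sigma$ is the parity automorphism ($(-1)^i$ on $V_{\bar i}$). For an automorphism $x$ of order $T$, with $T'$ the order of $x\sigma$ and $V^r=\{v:xv=e^{-2\pi ir/T}v\}$: an $x$-twisted module is a space $M$ with $Y_M(v,z)=\sum_{n\in r/T+\mathbb Z}v(n)z^{-n-1}$ for $v\in V^r$, which is truncated, has $Y_M(\mathbf1,z)=\mathrm{id}$, and satisfies $z_0^{-1}\delta(\frac{z_1-z_2}{z_0})Y_M(u,z_1)Y_M(v,z_2)-\epsilon_{u,v}z_0^{-1}\delta(\frac{z_2-z_1}{-z_0})Y_M(v,z_2)Y_M(u,z_1)=z_2^{-1}(\frac{z_1-z_0}{z_2})^{-r/T}\delta(\frac{z_1-z_0}{z_2})Y_M(Y(u,z_0)v,z_2)$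 for $u\in V^r$. It is moreover the direct sum of finite-dimensional $L(0)$-eigenspaces $M_\lambda$ with $M_{\lambda+n/T'}=0$ for $n\ll0$. For $k\in\mathrm{Aut}(V)$, $k\circ M$ is the $kxk^{-1}$-twisted module equal to $M$ as a space with $Y_{k\circ M}(v,z)=Y_M(k^{-1}v,z)$. *)

theory Defs
  imports Complex_Main "HOL-Library.Groups_Big_Fun"
begin

text \<open>A vertex operator
  (super)algebra is given by its modes: Y u n v = u(n)v, i.e. Y(u,z) = sum u(n) z^(-n-1).
  Infinite sums with finitely many nonzero terms are expressed by Sum_any.\<close>

text \<open>L(0)-weight space of weight lam; L(0) = omega(1).\<close>
definition wt_space :: "(complex \<Rightarrow> 'v \<Rightarrow> 'v) \<Rightarrow> ('v \<Rightarrow> int \<Rightarrow> 'v \<Rightarrow> 'v) \<Rightarrow> 'v \<Rightarrow> complex \<Rightarrow> 'v set"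
  where "wt_space smul Y om lam = {v. Y om 1 v = smul lam v}"

definition par_space :: "(complex \<Rightarrow> 'v::ab_group_add \<Rightarrow> 'v) \<Rightarrow> ('v \<Rightarrow> int \<Rightarrow> 'v \<Rightarrow> 'v) \<Rightarrow> 'v \<Rightarrow> nat \<Rightarrow> 'v set"
  where "par_space smul Y om p =
    module.span smul (\<Union>k\<in>{k::int. k mod 2 = int p}. wt_space smul Y om (of_int k / 2))"

definition fin_dim :: "(complex \<Rightarrow> 'v::ab_group_add \<Rightarrow> 'v) \<Rightarrow> 'v set \<Rightarrow> bool"
  where "fin_dim smul S = (\<exists>B. finite B \<and> S \<subseteq> module.span smul B)"

definition is_VOSA :: "(complex \<Rightarrow> 'v::ab_group_add \<Rightarrow> 'v) \<Rightarrow> ('v \<Rightarrow> int \<Rightarrow> 'v \<Rightarrow> 'v) \<Rightarrow> 'v \<Rightarrow> 'v \<Rightarrow> bool"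
  where "is_VOSA smul Y vac om =
   (vector_space smul \<and>
    (\<forall>u n. Vector_Spaces.linear smul smul (Y u n)) \<and>
    (\<forall>n v. Vector_Spaces.linear smul smul (\<lambda>u. Y u n v)) \<and>
    \<comment> \<open>truncation\<close>
    (\<forall>u v. \<exists>N::int. \<forall>n\<ge>N. Y u n v = 0) \<and>
    \<comment> \<open>vacuum and creation\<close>
    (\<forall>n v. Y vac n v = (if n = -1 then v else 0)) \<and>
    (\<forall>v n. n \<ge> 0 \<longrightarrow> Y v n vac = 0) \<and>
    (\<forall>v. Y v (-1) vac = v) \<and>
    \<comment> \<open>super Jacobi identity, in components (Borcherds identity)\<close>
    (\<forall>p q u v. p < 2 \<longrightarrow> q < 2 \<longrightarrow> u \<in> par_space smul Y om p \<longrightarrow> v \<in> par_space smul Y om q \<longrightarrow>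
      (\<forall>(m::int) (n::int) (l::int) w.
        Sum_any (\<lambda>i::nat. smul ((of_int m::complex) gchoose i) (Y (Y u (l + int i) v) (m + n - int i) w))
        = Sum_any (\<lambda>i::nat. smul ((-1)^i * ((of_int l::complex) gchoose i))
            (Y u (m + l - int i) (Y v (n + int i) w)
             - smul ((-1)^(p*q) * (-1) ^ nat \<bar>l\<bar>) (Y v (n + l - int i) (Y u (m + int i) w)))))) \<and>
    \<comment> \<open>Virasoro relations for L(n) = omega(n+1)\<close>
    (\<exists>c::complex. \<forall>(m::int) (n::int) v.
       Y om (m+1) (Y om (n+1) v) - Y om (n+1) (Y om (m+1) v)
       = smul (of_int (m - n)) (Y om (m+n+1) v)
         + smul (if m + n = 0 then (of_int m ^ 3 - of_int m) / 12 * c else 0) v) \<and>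
    \<comment> \<open>L(-1)-derivative property: Y(L(-1)u,z) = d/dz Y(u,z)\<close>
    (\<forall>u n w. Y (Y om 0 u) n w = smul (- of_int n) (Y u (n - 1) w)) \<and>
    om \<in> wt_space smul Y om 2 \<and>
    \<comment> \<open>grading by L(0)-weights in 1/2 Z, finite-dimensional, bounded below\<close>
    module.span smul (\<Union>k::int. wt_space smul Y om (of_int k / 2)) = UNIV \<and>
    (\<forall>k::int. fin_dim smul (wt_space smul Y om (of_int k / 2))) \<and>
    (\<exists>N::int. \<forall>k<N. wt_space smul Y om (of_int k / 2) = {0}))"

definition is_aut :: "(complex \<Rightarrow> 'v::ab_group_add \<Rightarrow> 'v) \<Rightarrow> ('v \<Rightarrow> int \<Rightarrow> 'v \<Rightarrow> 'v) \<Rightarrow> 'v \<Rightarrow> 'v \<Rightarrow> ('v \<Rightarrow> 'v) \<Rightarrow> bool"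
  where "is_aut smul Y vac om g =
    (Vector_Spaces.linear smul smul g \<and> bij g \<and> g vac = vac \<and> g om = om \<and>
     (\<forall>u n v. g (Y u n v) = Y (g u) n (g v)))"

definition finite_order :: "('v \<Rightarrow> 'v) \<Rightarrow> bool"
  where "finite_order g = (\<exists>k::nat. k > 0 \<and> g ^^ k = id)"

definition aut_order :: "('v \<Rightarrow> 'v) \<Rightarrow> nat"
  where "aut_order g = (LEAST k::nat. k > 0 \<and> g ^^ k = id)"

definition is_parity_aut :: "(complex \<Rightarrow> 'v::ab_group_add \<Rightarrow> 'v) \<Rightarrow> ('v \<Rightarrow> int \<Rightarrow> 'v \<Rightarrow> 'v) \<Rightarrow> 'v \<Rightarrow> ('v \<Rightarrow> 'v) \<Rightarrow> bool"
  where "is_parity_aut smul Y om sig =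
    (Vector_Spaces.linear smul smul sig \<and>
     (\<forall>v \<in> par_space smul Y om 0. sig v = v) \<and>
     (\<forall>v \<in> par_space smul Y om 1. sig v = - v))"

definition eig_part :: "(complex \<Rightarrow> 'v \<Rightarrow> 'v) \<Rightarrow> ('v \<Rightarrow> 'v) \<Rightarrow> nat \<Rightarrow> 'v set"
  where "eig_part smul x r =
    {v. x v = smul (exp (- 2 * of_real pi * \<i> * of_nat r / of_nat (aut_order x))) v}"

text \<open>x-twisted module, with modes YM v q = v(q) for rational q,
  i.e. Y_M(v,z) = sum v(q) z^(-q-1); L(0) on M is omega(1).\<close>
definition is_twisted_module ::
  "(complex \<Rightarrow> 'v::ab_group_add \<Rightarrow> 'v) \<Rightarrow> ('v \<Rightarrow> int \<Rightarrow> 'v \<Rightarrow> 'v) \<Rightarrow> 'v \<Rightarrow> 'v \<Rightarrow> ('v \<Rightarrow> 'v) \<Rightarrow> ('v \<Rightarrow> 'v)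
   \<Rightarrow> (complex \<Rightarrow> 'm::ab_group_add \<Rightarrow> 'm) \<Rightarrow> ('v \<Rightarrow> rat \<Rightarrow> 'm \<Rightarrow> 'm) \<Rightarrow> bool"
  where "is_twisted_module smul Y vac om sig x smulM YM =
   (let T = aut_order x; T' = aut_order (x \<circ> sig) in
    vector_space smulM \<and>
    (\<forall>v q. Vector_Spaces.linear smulM smulM (YM v q)) \<and>
    (\<forall>q w. Vector_Spaces.linear smul smulM (\<lambda>v. YM v q w)) \<and>
    \<comment> \<open>for v in V^r only modes in r/T + Z occur\<close>
    (\<forall>r<T. \<forall>v\<in>eig_part smul x r. \<forall>q::rat. q - of_nat r / of_nat T \<notin> \<int> \<longrightarrow> (\<forall>w. YM v q w = 0)) \<and>
    \<comment> \<open>truncation\<close>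
    (\<forall>v w. \<exists>N::rat. \<forall>q>N. YM v q w = 0) \<and>
    \<comment> \<open>Y_M(1,z) = id\<close>
    (\<forall>q w. YM vac q w = (if q = -1 then w else 0)) \<and>
    \<comment> \<open>twisted super Jacobi identity, in components\<close>
    (\<forall>r<T. \<forall>p<2. \<forall>s<2. \<forall>u v.
       u \<in> eig_part smul x r \<longrightarrow> u \<in> par_space smul Y om p \<longrightarrow> v \<in> par_space smul Y om s \<longrightarrow>
       (\<forall>(m::rat) (n::rat) (l::int) w. m - of_nat r / of_nat T \<in> \<int> \<longrightarrow>
        Sum_any (\<lambda>i::nat. smulM ((of_rat m::complex) gchoose i)
                     (YM (Y u (l + int i) v) (m + n - of_nat i) w))
        = Sum_any (\<lambda>i::nat. smulM ((-1)^i * ((of_int l::complex) gchoose i))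
            (YM u (m + of_int l - of_nat i) (YM v (n + of_nat i) w)
             - smulM ((-1)^(p*s) * (-1) ^ nat \<bar>l\<bar>) (YM v (n + of_int l - of_nat i) (YM u (m + of_nat i) w)))))) \<and>
    \<comment> \<open>M is the direct sum of finite-dimensional L(0)-eigenspaces M_lam,
        with M_(lam + n/T') = 0 for n << 0\<close>
    module.span smulM (\<Union>lam. {w. YM om 1 w = smulM lam w}) = UNIV \<and>
    (\<forall>lam. fin_dim smulM {w. YM om 1 w = smulM lam w}) \<and>
    (\<forall>lam. \<exists>N::int. \<forall>n<N. {w. YM om 1 w = smulM (lam + of_int n / of_nat T') w} = {0}))"

definition simple_module :: "(complex \<Rightarrow> 'm::ab_group_add \<Rightarrow> 'm) \<Rightarrow> ('v \<Rightarrow> rat \<Rightarrow> 'm \<Rightarrow> 'm) \<Rightarrow> bool"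
  where "simple_module smulM YM =
    ((\<exists>w::'m. w \<noteq> 0) \<and>
     (\<forall>W. module.subspace smulM W \<longrightarrow> (\<forall>v q w. w \<in> W \<longrightarrow> YM v q w \<in> W) \<longrightarrow> W = {0} \<or> W = UNIV))"

definition comp_module :: "('v \<Rightarrow> 'v) \<Rightarrow> ('v \<Rightarrow> rat \<Rightarrow> 'm \<Rightarrow> 'm) \<Rightarrow> ('v \<Rightarrow> rat \<Rightarrow> 'm \<Rightarrow> 'm)"
  where "comp_module k YM = (\<lambda>v. YM (inv k v))"

definition module_iso :: "(complex \<Rightarrow> 'm::ab_group_add \<Rightarrow> 'm) \<Rightarrow> ('v \<Rightarrow> rat \<Rightarrow> 'm \<Rightarrow> 'm) \<Rightarrow> ('v \<Rightarrow> rat \<Rightarrow> 'm \<Rightarrow> 'm) \<Rightarrow> bool"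
  where "module_iso smulM Y1 Y2 =
    (\<exists>phi. Vector_Spaces.linear smulM smulM phi \<and> bij phi \<and>
       (\<forall>v q w. phi (Y1 v q w) = Y2 v q (phi w)))"

end

theory Submission
  imports Defs "HOL-Analysis.Complex_Transcendental"
begin

text \<open>Let M be an x-twisted module, T the order of x and sigma the parity automorphism.
  The operator e^(2 pi i L(0)) is an isomorphism from (sigma x) o M to M, for any x.
  Indeed, if u lies in V^r and has weight k/2, then a mode u(q) with q in r/T + Z shifts
  L(0)-eigenvalues by k/2 - q - 1, so conjugation by e^(2 pi i L(0)) multiplies u(q) by
  e^(2 pi i (k/2 - q - 1)) = (-1)^k e^(-2 pi i r/T), which is the eigenvalue of sigma x on u.
  For x = g sigma the automorphism g commutes with sigma, so sigma x = g; for x = id,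
  sigma x = sigma.\<close>

lemmas linear_map_0 = module_hom.zero[OF module_hom_linearI]
  and linear_map_add = module_hom.add[OF module_hom_linearI]
  and linear_map_scale = module_hom.scale[OF module_hom_linearI]
  and linear_map_neg = module_hom.neg[OF module_hom_linearI]
  and linear_map_sum = module_hom.sum[OF module_hom_linearI]

lemma Sum_any_nat_lessThan:
  fixes f :: "nat \<Rightarrow> 'a::comm_monoid_add"
  assumes "\<And>i. n \<le> i \<Longrightarrow> f i = 0"
  shows "Sum_any f = (\<Sum>i<n. f i)"
  by (rule Sum_any.expand_superset) (use assms leI in auto)

lemma linear_Sum_any:
  assumes h: "Vector_Spaces.linear s1 s2 h" and fin: "finite {a. f a \<noteq> 0}"
  shows "h (Sum_any f) = Sum_any (\<lambda>a. h (f a))"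
proof -
  have "{a. h (f a) \<noteq> 0} \<subseteq> {a. f a \<noteq> 0}" using linear_map_0[OF h] by auto
  then show ?thesis
    using fin by (simp add: Sum_any.expand_superset[of "{a. f a \<noteq> 0}"] linear_map_sum[OF h])
qed

lemma exp_int_pi_i: "exp (of_int k * of_real pi * \<i>) = (if even k then 1 else - 1 :: complex)"
proof (cases "even k")
  case True
  then obtain a where "k = 2 * a" by blast
  then have "of_int k * of_real pi * \<i> = \<i> * (of_int a * (of_real pi * 2))"
    by (simp add: algebra_simps)
  with True show ?thesis by (simp only: exp_2pi_1_int if_True)
next
  case False
  then obtain a where "k = 2 * a + 1" by (metis oddE)
  then have "of_int k * of_real pi * \<i> = ((2 * of_int a + 1) * pi) * \<i>"
    by simp
  with False show ?thesis by (metis Ints_of_int exp_integer_2pi_plus1)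
qed

lemma exp_two_pi_i_shift:
  assumes "(of_rat q :: complex) = of_nat r / of_nat T + of_int j"
  shows "exp (2 * of_real pi * \<i> * (lam + of_int k / 2 - of_rat q - 1))
       = exp (2 * of_real pi * \<i> * lam)
         * ((if even k then 1 else - 1) * exp (- 2 * of_real pi * \<i> * of_nat r / of_nat T))"
proof -
  have "2 * of_real pi * \<i> * (lam + of_int k / 2 - of_rat q - 1)
      = 2 * of_real pi * \<i> * lam + (of_int k * of_real pi * \<i>
        + (- 2 * of_real pi * \<i> * of_nat r / of_nat T + \<i> * (of_int (- j - 1) * (of_real pi * 2))))"
    by (simp add: assms algebra_simps diff_divide_distrib add_divide_distrib)
  then show ?thesis
    by (simp only: exp_add exp_2pi_1_int exp_int_pi_i mult_1_right)
qed

section \<open>Functional calculus of a diagonalizable operator\<close>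

locale diagonalizable_operator =
  fixes sM :: "complex \<Rightarrow> 'm::ab_group_add \<Rightarrow> 'm" and L :: "'m \<Rightarrow> 'm"
  assumes linear_L: "Vector_Spaces.linear sM sM L"
    and span_eigenvectors: "module.span sM (\<Union>lam. {w. L w = sM lam w}) = UNIV"
begin

sublocale vector_space sM
  using linear_L by (simp add: Vector_Spaces.linear_def)

interpretation L: module_hom sM sM L
  using linear_L by (rule module_hom_linearI)

definition eigenspace :: "complex \<Rightarrow> 'm set"
  where "eigenspace lam = {w. L w = sM lam w}"

lemma subspace_eigenspace: "subspace (eigenspace lam)"
  unfolding subspace_def eigenspace_def
  by (simp add: L.add L.scale L.zero scale_right_distrib mult.commute)

lemma span_eigenspaces: "span (\<Union>lam. eigenspace lam) = UNIV"
  using span_eigenvectors by (simp add: eigenspace_def)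

lemma sum_eigenvectors_eq_0:
  assumes "finite S" "\<And>lam. lam \<in> S \<Longrightarrow> f lam \<in> eigenspace lam" "sum f S = 0" "lam \<in> S"
  shows "f lam = 0"
  using assms
proof (induction S arbitrary: f lam rule: finite_induct)
  case empty
  then show ?case by simp
next
  case (insert mu S f)
  \<comment> \<open>applying L - mu kills the mu-component and rescales the others by lam - mu\<close>
  define g where "g lam = sM (lam - mu) (f lam)" for lam
  have f_mu: "f mu = - sum f S"
    using insert.prems(2) insert.hyps by (simp add: eq_neg_iff_add_eq_0)
  have "sum g S = L (sum f S) - sM mu (sum f S)"
    using insert.prems(1)
    by (simp add: g_def scale_left_diff_distrib sum_subtractf eigenspace_def L.sum scale_sum_right)
  also have "\<dots> = 0"
    using insert.prems(1)[of mu] f_mu by (simp add: eigenspace_def L.neg)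
  finally have "g lam = 0" if "lam \<in> S" for lam
    using insert.prems(1) that
    by (intro insert.IH[of g]) (simp_all add: g_def subspace_scale[OF subspace_eigenspace])
  then have f_S: "\<forall>lam\<in>S. f lam = 0"
    using insert.hyps(2) by (auto simp: g_def)
  then have "f mu = 0" using f_mu by simp
  with f_S insert.prems(3) show ?case by auto
qed

definition eigendecomposition :: "(complex \<Rightarrow> 'm) \<Rightarrow> 'm \<Rightarrow> bool"
  where "eigendecomposition f w \<longleftrightarrow>
    finite {lam. f lam \<noteq> 0} \<and> (\<forall>lam. f lam \<in> eigenspace lam) \<and> Sum_any f = w"

lemma eigendecomposition_eigenvector:
  "w \<in> eigenspace mu \<Longrightarrow> eigendecomposition (\<lambda>lam. if lam = mu then w else 0) w"
  by (auto simp: eigendecomposition_def subspace_0[OF subspace_eigenspace]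
      Sum_any.expand_superset[of "{mu}"])

lemma eigendecomposition_add:
  assumes "eigendecomposition f a" "eigendecomposition f' b"
  shows "eigendecomposition (\<lambda>lam. f lam + f' lam) (a + b)"
proof -
  have "{lam. f lam + f' lam \<noteq> 0} \<subseteq> {lam. f lam \<noteq> 0} \<union> {lam. f' lam \<noteq> 0}" by auto
  then show ?thesis
    using assms by (auto simp: eigendecomposition_def Sum_any.distrib
        intro: finite_subset subspace_add[OF subspace_eigenspace])
qed

lemma eigendecomposition_rescale:
  assumes "eigendecomposition f w"
  shows "eigendecomposition (\<lambda>lam. sM (c lam) (f lam)) (Sum_any (\<lambda>lam. sM (c lam) (f lam)))"
proof -
  have "{lam. sM (c lam) (f lam) \<noteq> 0} \<subseteq> {lam. f lam \<noteq> 0}" by auto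
  then show ?thesis
    using assms by (auto simp: eigendecomposition_def
        intro: finite_subset subspace_scale[OF subspace_eigenspace])
qed

lemma eigendecomposition_scale:
  assumes "eigendecomposition f w"
  shows "eigendecomposition (\<lambda>lam. sM c (f lam)) (sM c w)"
  using eigendecomposition_rescale[OF assms, of "\<lambda>_. c"] assms
    linear_Sum_any[OF linear_scale_self, of f c]
  by (simp add: eigendecomposition_def)

lemma eigendecomposition_exists: "\<exists>f. eigendecomposition f w"
proof -
  have "w \<in> span (\<Union>lam. eigenspace lam)" using span_eigenspaces by simp
  then show ?thesis
  proof (induction rule: span_induct_alt)
    case base
    show ?case
      by (rule exI[of _ "\<lambda>_. 0"]) (simp add: eigendecomposition_def subspace_0[OF subspace_eigenspace])
  next
    case (step c x y)
    from step(1) obtain mu where "x \<in> eigenspace mu" by blast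
    then have "eigendecomposition (\<lambda>lam. sM c (if lam = mu then x else 0)) (sM c x)"
      by (intro eigendecomposition_scale eigendecomposition_eigenvector)
    with step(2) show ?case by (blast intro: eigendecomposition_add)
  qed
qed

lemma eigendecomposition_unique:
  assumes "eigendecomposition f w" "eigendecomposition f' w"
  shows "f = f'"
proof
  fix lam
  let ?d = "\<lambda>lam. f lam - f' lam"
  have "eigendecomposition (\<lambda>lam. f lam + sM (-1) (f' lam)) (w + sM (-1) w)"
    by (rule eigendecomposition_add[OF assms(1) eigendecomposition_scale[OF assms(2)]])
  then have fin: "finite {lam. ?d lam \<noteq> 0}" and eig: "\<And>lam. ?d lam \<in> eigenspace lam"
    and sum: "Sum_any ?d = 0"
    by (simp_all add: eigendecomposition_def scale_minus_left)
  have "?d lam = 0"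
  proof (rule ccontr)
    assume "?d lam \<noteq> 0"
    moreover have "sum ?d {lam. ?d lam \<noteq> 0} = 0"
      using sum Sum_any.expand_superset[OF fin subset_refl] by simp
    ultimately show False
      using sum_eigenvectors_eq_0[OF fin eig] by blast
  qed
  then show "f lam = f' lam" by simp
qed

definition components :: "'m \<Rightarrow> complex \<Rightarrow> 'm"
  where "components w = (THE f. eigendecomposition f w)"

lemma components_eqI: "eigendecomposition f w \<Longrightarrow> components w = f"
  unfolding components_def by (rule the_equality) (auto intro: eigendecomposition_unique)

definition spectral_map :: "(complex \<Rightarrow> complex) \<Rightarrow> 'm \<Rightarrow> 'm"
  where "spectral_map phi w = Sum_any (\<lambda>lam. sM (phi lam) (components w lam))"

lemma spectral_map_eq:
  "eigendecomposition f w \<Longrightarrow> spectral_map phi w = Sum_any (\<lambda>lam. sM (phi lam) (f lam))"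
  by (simp add: spectral_map_def components_eqI)

lemma eigendecomposition_spectral_map:
  "eigendecomposition f w \<Longrightarrow> eigendecomposition (\<lambda>lam. sM (phi lam) (f lam)) (spectral_map phi w)"
  using eigendecomposition_rescale spectral_map_eq by metis

lemma spectral_map_eigenvector: "w \<in> eigenspace mu \<Longrightarrow> spectral_map phi w = sM (phi mu) w"
  by (simp add: spectral_map_eq[OF eigendecomposition_eigenvector] if_distrib
      Sum_any.expand_superset[of "{mu}"] cong: if_cong)

lemma linear_spectral_map: "Vector_Spaces.linear sM sM (spectral_map phi)"
proof -
  have same_vector: "w = w'" if "eigendecomposition F w" "eigendecomposition F w'" for F w w'
    using that by (simp add: eigendecomposition_def)
  have "spectral_map phi (a + b) = spectral_map phi a + spectral_map phi b" for a b
  proof -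
    obtain f f' where f: "eigendecomposition f a" and f': "eigendecomposition f' b"
      using eigendecomposition_exists by metis
    show ?thesis
      using eigendecomposition_spectral_map[OF eigendecomposition_add[OF f f'], of phi]
        eigendecomposition_add[OF eigendecomposition_spectral_map[OF f] eigendecomposition_spectral_map[OF f']]
      by (simp add: scale_right_distrib same_vector)
  qed
  moreover have "spectral_map phi (sM c a) = sM c (spectral_map phi a)" for c a
  proof -
    obtain f where f: "eigendecomposition f a"
      using eigendecomposition_exists by metis
    show ?thesis
      using eigendecomposition_spectral_map[OF eigendecomposition_scale[OF f], of phi c]
        eigendecomposition_scale[OF eigendecomposition_spectral_map[OF f], of c phi]
      by (simp add: mult.commute same_vector)
  qed
  ultimately show ?thesis
    by (simp add: Vector_Spaces.linear_iff vector_space_axioms)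
qed

lemma spectral_map_comp: "spectral_map chi (spectral_map phi w) = spectral_map (\<lambda>lam. chi lam * phi lam) w"
proof -
  obtain f where f: "eigendecomposition f w"
    using eigendecomposition_exists by metis
  have "spectral_map chi (spectral_map phi w) = Sum_any (\<lambda>lam. sM (chi lam) (sM (phi lam) (f lam)))"
    by (rule spectral_map_eq[OF eigendecomposition_spectral_map[OF f]])
  then show ?thesis by (simp add: spectral_map_eq[OF f])
qed

lemma spectral_map_one: "spectral_map (\<lambda>_. 1) w = w"
proof -
  obtain f where f: "eigendecomposition f w"
    using eigendecomposition_exists by metis
  then show ?thesis by (simp add: spectral_map_eq[OF f] eigendecomposition_def)
qed

lemma bij_spectral_map:
  assumes "\<And>lam. phi lam \<noteq> 0"
  shows "bij (spectral_map phi)"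
proof -
  have "spectral_map (\<lambda>lam. inverse (phi lam)) (spectral_map phi w) = w"
    and "spectral_map phi (spectral_map (\<lambda>lam. inverse (phi lam)) w) = w" for w
    by (simp_all add: spectral_map_comp assms spectral_map_one)
  then show ?thesis by (metis bij_betw_byWitness subset_UNIV surjI)
qed

end

section \<open>Operators of finite order\<close>

lemma aut_order_pos: "finite_order x \<Longrightarrow> 0 < aut_order x"
  and funpow_aut_order: "finite_order x \<Longrightarrow> x ^^ aut_order x = id"
  unfolding finite_order_def aut_order_def by (metis (mono_tags, lifting) LeastI_ex)+

lemma funpow_comp_commute:
  assumes "\<And>y. f (g y) = g (f y)"
  shows "(f \<circ> g) ^^ n = f ^^ n \<circ> g ^^ n"
proof -
  have g_funpow: "g ((f ^^ n) y) = (f ^^ n) (g y)" for n y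
    by (induction n) (simp_all add: assms[symmetric])
  show ?thesis
    by (induction n) (simp_all add: g_funpow fun_eq_iff)
qed

lemma finite_order_comp:
  assumes "\<And>y. f (g y) = g (f y)" "finite_order f" "finite_order g"
  shows "finite_order (f \<circ> g)"
proof -
  obtain a b where "0 < a" "f ^^ a = id" "0 < b" "g ^^ b = id"
    using assms(2,3) by (auto simp: finite_order_def)
  then have "f ^^ (a * b) = id" "g ^^ (b * a) = id"
    by (simp_all add: funpow_mult[symmetric])
  then have "(f \<circ> g) ^^ (a * b) = id"
    by (simp add: funpow_comp_commute[where f = f and g = g, OF assms(1)] mult.commute[of b])
  with \<open>0 < a\<close> \<open>0 < b\<close> show ?thesis
    unfolding finite_order_def by (intro exI[of _ "a * b"]) simp
qed

lemma surj_finite_order: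
  assumes "finite_order x"
  shows "surj x"
proof (rule surjI)
  fix u
  have "x ((x ^^ (aut_order x - 1)) u) = (x ^^ Suc (aut_order x - 1)) u"
    by simp
  then show "x ((x ^^ (aut_order x - 1)) u) = u"
    using aut_order_pos[OF assms] funpow_aut_order[OF assms] by simp
qed

lemma sum_powers_root_unity:
  fixes T j :: nat
  assumes "j < T"
  shows "(\<Sum>r<T. exp (2 * of_real pi * \<i> / of_nat T) ^ (r * j)) = (if j = 0 then of_nat T else 0)"
proof (cases "j = 0")
  case False
  define z where "z = exp (2 * of_real pi * \<i> * of_nat j / of_nat T)"
  have "exp (2 * of_real pi * \<i> / of_nat T) ^ (r * j) = z ^ r" for r
    by (simp add: z_def power_mult[of _ r j, simplified mult.commute] exp_of_nat_mult[symmetric]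
        mult.commute mult.left_commute)
  moreover have "z \<noteq> 1"
    using False assms complex_root_unity_eq_1[of T j] by (auto simp: z_def dest: dvd_imp_le)
  moreover have "z ^ T = 1"
    using assms complex_root_unity[of T j] by (simp add: z_def)
  ultimately show ?thesis
    using False geometric_sum[of z T] by simp
qed simp

locale finite_order_operator = vector_space smul for smul :: "complex \<Rightarrow> 'v::ab_group_add \<Rightarrow> 'v" +
  fixes x :: "'v \<Rightarrow> 'v"
  assumes linear_x: "Vector_Spaces.linear smul smul x" and finite_order_x: "finite_order x"
begin

interpretation x: module_hom smul smul x
  using linear_x by (rule module_hom_linearI)

definition eigenprojection :: "nat \<Rightarrow> 'v \<Rightarrow> 'v"
  where "eigenprojection r u = smul (1 / of_nat (aut_order x))
    (\<Sum>j<aut_order x. smul (exp (2 * of_real pi * \<i> / of_nat (aut_order x)) ^ (r * j)) ((x ^^ j) u))"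

lemma eigenprojection_eig_part: "eigenprojection r u \<in> eig_part smul x r"
proof -
  define T where "T = aut_order x"
  define w where "w = exp (2 * of_real pi * \<i> / of_nat T)"
  define e where "e = exp (- 2 * of_real pi * \<i> * of_nat r / of_nat T)"
  define b where "b j = smul (w ^ (r * j)) ((x ^^ j) u)" for j
  have T: "0 < T" "x ^^ T = id"
    using finite_order_x by (simp_all add: T_def aut_order_pos funpow_aut_order)
  have "e * w ^ r = 1"
    by (simp add: e_def w_def exp_of_nat_mult[symmetric] exp_add[symmetric] field_simps)
  then have x_b: "x (b j) = smul e (b (Suc j))" for j
    by (simp add: b_def x.scale power_add mult.assoc[symmetric] mult.commute[of e])
  have "w ^ T = 1"
    using T(1) by (simp add: w_def exp_of_nat_mult[symmetric])
  then have "b T = b 0"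
    by (simp add: b_def T(2) power_mult[symmetric] mult.commute[of r] power_mult)
  then have "(\<Sum>j<T. b (Suc j)) = (\<Sum>j<T. b j)"
    using sum.lessThan_Suc_shift[of b T] by (simp add: add.commute)
  then have "x (\<Sum>j<T. b j) = smul e (\<Sum>j<T. b j)"
    by (simp add: x.sum x_b scale_sum_right[symmetric])
  moreover have "eigenprojection r u = smul (1 / of_nat T) (\<Sum>j<T. b j)"
    by (simp add: eigenprojection_def b_def T_def w_def)
  ultimately show ?thesis
    by (simp add: eig_part_def x.scale e_def T_def mult.commute)
qed

lemma sum_eigenprojection: "(\<Sum>r<aut_order x. eigenprojection r u) = u"
proof -
  define T where "T = aut_order x"
  have T: "0 < T"
    using finite_order_x by (simp add: T_def aut_order_pos)
  have "(\<Sum>r<T. \<Sum>j<T. smul (exp (2 * of_real pi * \<i> / of_nat T) ^ (r * j)) ((x ^^ j) u))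
      = (\<Sum>j<T. smul (\<Sum>r<T. exp (2 * of_real pi * \<i> / of_nat T) ^ (r * j)) ((x ^^ j) u))"
    by (subst sum.swap) (simp add: scale_sum_left)
  also have "\<dots> = (\<Sum>j<T. if j = 0 then smul (of_nat T) u else 0)"
    by (intro sum.cong) (simp_all add: sum_powers_root_unity)
  also have "\<dots> = smul (of_nat T) u"
    using T by (simp add: sum.delta)
  finally show ?thesis
    using T by (simp add: eigenprojection_def T_def[symmetric] scale_sum_right[symmetric])
qed

lemma eigenprojection_in_subspace:
  assumes "subspace W" "x ` W \<subseteq> W" "u \<in> W"
  shows "eigenprojection r u \<in> W"
proof -
  have "(x ^^ j) u \<in> W" for j
    by (induction j) (use assms in auto)
  then show ?thesis
    unfolding eigenprojection_def using assms(1)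
    by (intro subspace_scale subspace_sum) auto
qed

lemma in_span_eig_parts:
  assumes "subspace W" "x ` W \<subseteq> W" "u \<in> W"
  shows "u \<in> span {v \<in> W. \<exists>r<aut_order x. v \<in> eig_part smul x r}"
proof -
  have "(\<Sum>r<aut_order x. eigenprojection r u) \<in> span {v \<in> W. \<exists>r<aut_order x. v \<in> eig_part smul x r}"
    using assms eigenprojection_eig_part eigenprojection_in_subspace
    by (intro span_sum span_base) auto
  then show ?thesis by (simp add: sum_eigenprojection)
qed

end

section \<open>Vertex operator superalgebras and their twisted modules\<close>

locale vosa =
  fixes smul :: "complex \<Rightarrow> 'v::ab_group_add \<Rightarrow> 'v" and Y :: "'v \<Rightarrow> int \<Rightarrow> 'v \<Rightarrow> 'v"
    and vac om :: 'v
  assumes VOSA: "is_VOSA smul Y vac om"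
begin

sublocale V: vector_space smul
  using VOSA by (simp add: is_VOSA_def)

lemma linear_Y: "Vector_Spaces.linear smul smul (Y u n)"
  and Y_vac: "0 \<le> n \<Longrightarrow> Y v n vac = 0"
  and Y_vac_minus_one: "Y v (-1) vac = v"
  and Y_L_minus_one: "Y (Y om 0 u) n w = smul (- of_int n) (Y u (n - 1) w)"
  and om_wt_space: "om \<in> wt_space smul Y om 2"
  and span_wt_spaces: "V.span (\<Union>k::int. wt_space smul Y om (of_int k / 2)) = UNIV"
  using VOSA by (simp_all add: is_VOSA_def)

lemma L_minus_one_eq: "Y om 0 u = Y u (-2) vac"
  using Y_vac_minus_one[of "Y om 0 u"] Y_L_minus_one[of u "-1" vac] by (simp add: Y_vac_minus_one)

lemma subspace_wt_space: "V.subspace (wt_space smul Y om a)"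
  using linear_map_0[OF linear_Y] linear_map_add[OF linear_Y] linear_map_scale[OF linear_Y]
  by (auto simp: V.subspace_def wt_space_def V.scale_right_distrib mult.commute)

lemma wt_space_par_space:
  "u \<in> wt_space smul Y om (of_int k / 2) \<Longrightarrow> u \<in> par_space smul Y om (nat (k mod 2))"
  unfolding par_space_def by (rule V.span_base) auto

lemma vac_par_space: "vac \<in> par_space smul Y om 0"
  using wt_space_par_space[of vac 0] Y_vac[of 1 om] by (simp add: wt_space_def)

lemma om_par_space: "om \<in> par_space smul Y om 0"
  using wt_space_par_space[of om 4] om_wt_space by simp

lemma linear_eq_on_wt_spaces:
  assumes "Vector_Spaces.linear smul smul f" "Vector_Spaces.linear smul smul f'"
    and "\<And>k u. u \<in> wt_space smul Y om (of_int k / 2) \<Longrightarrow> f u = f' u"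
  shows "f u = f' u"
proof -
  interpret vector_space_pair smul smul ..
  show ?thesis
    by (rule linear_eq_on[OF assms(1,2), of u "\<Union>k::int. wt_space smul Y om (of_int k / 2)"])
      (use span_wt_spaces assms(3) in auto)
qed

lemma aut_wt_space:
  assumes "is_aut smul Y vac om g" "u \<in> wt_space smul Y om a"
  shows "g u \<in> wt_space smul Y om a"
proof -
  have "Y om 1 (g u) = g (Y om 1 u)" using assms(1) by (simp add: is_aut_def)
  also have "\<dots> = smul a (g u)"
    using assms linear_map_scale[of smul smul g] by (simp add: is_aut_def wt_space_def)
  finally show ?thesis by (simp add: wt_space_def)
qed

lemma span_homogeneous_eig_parts:
  assumes "Vector_Spaces.linear smul smul x" "finite_order x"
    and "\<And>k u. u \<in> wt_space smul Y om (of_int k / 2) \<Longrightarrow> x u \<in> wt_space smul Y om (of_int k / 2)"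
  shows "V.span {u. \<exists>k r. r < aut_order x \<and> u \<in> wt_space smul Y om (of_int k / 2) \<and> u \<in> eig_part smul x r}
    = UNIV" (is "V.span ?G = UNIV")
proof -
  interpret finite_order_operator smul x
    using assms(1,2) by (simp add: finite_order_operator_def finite_order_operator_axioms_def
        V.vector_space_axioms)
  have "wt_space smul Y om (of_int k / 2) \<subseteq> V.span ?G" for k
  proof
    fix u
    assume "u \<in> wt_space smul Y om (of_int k / 2)"
    then have "u \<in> V.span {v \<in> wt_space smul Y om (of_int k / 2). \<exists>r<aut_order x. v \<in> eig_part smul x r}"
      using assms(3) by (intro in_span_eig_parts subspace_wt_space) auto
    also have "\<dots> \<subseteq> V.span ?G"
      by (rule V.span_mono) blast
    finally show "u \<in> V.span ?G" .
  qed
  then have "V.span (\<Union>k::int. wt_space smul Y om (of_int k / 2)) \<subseteq> V.span ?G"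
    by (intro V.span_minimal) (auto simp: V.subspace_span)
  then show ?thesis
    using span_wt_spaces by auto
qed

end

locale vosa_parity = vosa +
  fixes sig
  assumes parity: "is_parity_aut smul Y om sig"
begin

lemma linear_sig: "Vector_Spaces.linear smul smul sig"
  using parity by (simp add: is_parity_aut_def)

lemma sig_wt_space:
  assumes "u \<in> wt_space smul Y om (of_int k / 2)"
  shows "sig u = (if even k then u else - u)"
  using wt_space_par_space[OF assms] parity
  by (auto simp: is_parity_aut_def even_iff_mod_2_eq_zero odd_iff_mod_2_eq_one)

lemma sig_sig: "sig (sig u) = u"
  using linear_eq_on_wt_spaces[OF Vector_Spaces.linear_compose[OF linear_sig linear_sig] V.linear_id]
    sig_wt_space linear_map_neg[OF linear_sig]
  by (metis comp_apply id_apply minus_minus)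

lemma sig_om: "sig om = om"
  using sig_wt_space[of om 4] om_wt_space by simp

lemma sig_preserves_wt_space:
  "u \<in> wt_space smul Y om (of_int k / 2) \<Longrightarrow> sig u \<in> wt_space smul Y om (of_int k / 2)"
  using sig_wt_space V.subspace_neg[OF subspace_wt_space] by auto

lemma commute_sig:
  assumes g: "Vector_Spaces.linear smul smul g"
    and "\<And>k u. u \<in> wt_space smul Y om (of_int k / 2) \<Longrightarrow> g u \<in> wt_space smul Y om (of_int k / 2)"
  shows "g (sig u) = sig (g u)"
  using linear_eq_on_wt_spaces[OF Vector_Spaces.linear_compose[OF linear_sig g]
      Vector_Spaces.linear_compose[OF g linear_sig]]
    assms(2) sig_wt_space linear_map_neg[OF g]
  by (metis comp_apply)

lemma sig_comp_eig_part:
  assumes "u \<in> eig_part smul x r" "u \<in> wt_space smul Y om (of_int k / 2)"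
  shows "sig (x u)
    = smul ((if even k then 1 else - 1) * exp (- 2 * of_real pi * \<i> * of_nat r / of_nat (aut_order x))) u"
  using assms(1) sig_wt_space[OF assms(2)] linear_map_scale[OF linear_sig]
  by (simp add: eig_part_def V.scale_minus_right)

lemma aut_commute_sig: "is_aut smul Y vac om g \<Longrightarrow> g (sig u) = sig (g u)"
  by (intro commute_sig) (auto simp: is_aut_def aut_wt_space)

lemma finite_order_comp_sig:
  assumes "is_aut smul Y vac om g" "finite_order g"
  shows "finite_order (g \<circ> sig)"
proof (rule finite_order_comp)
  show "g (sig u) = sig (g u)" for u
    using assms(1) by (rule aut_commute_sig)
  show "finite_order sig"
    unfolding finite_order_def
    by (rule exI[of _ 2]) (simp add: fun_eq_iff numeral_2_eq_2 sig_sig)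
qed fact

end

locale twisted_module = vosa_parity +
  fixes x and smulM :: "complex \<Rightarrow> 'm::ab_group_add \<Rightarrow> 'm" and YM
  assumes module: "is_twisted_module smul Y vac om sig x smulM YM"
begin

lemma linear_YM: "Vector_Spaces.linear smulM smulM (YM v q)"
  and linear_YM_left: "Vector_Spaces.linear smul smulM (\<lambda>v. YM v q w)"
  and YM_vac: "YM vac q w = (if q = -1 then w else 0)"
  and span_L0_eigenvectors: "module.span smulM (\<Union>lam. {w. YM om 1 w = smulM lam w}) = UNIV"
  using module by (simp_all add: is_twisted_module_def Let_def)

sublocale M: vector_space smulM
  using linear_YM by (simp add: Vector_Spaces.linear_def)

lemma YM_eig_part_vanish:
  assumes "r < aut_order x" "v \<in> eig_part smul x r" "q - of_nat r / of_nat (aut_order x) \<notin> \<int>"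
  shows "YM v q w = 0"
  using module assms by (simp add: is_twisted_module_def Let_def)

lemma twisted_Jacobi:
  assumes "r < aut_order x" "p < 2" "s < 2" "u \<in> eig_part smul x r" "u \<in> par_space smul Y om p"
    "v \<in> par_space smul Y om s" "m - of_nat r / of_nat (aut_order x) \<in> \<int>"
  shows "Sum_any (\<lambda>i::nat. smulM ((of_rat m::complex) gchoose i)
                     (YM (Y u (l + int i) v) (m + n - of_nat i) w))
        = Sum_any (\<lambda>i::nat. smulM ((-1)^i * ((of_int l::complex) gchoose i))
            (YM u (m + of_int l - of_nat i) (YM v (n + of_nat i) w)
             - smulM ((-1)^(p * s) * (-1) ^ nat \<bar>l\<bar>) (YM v (n + of_int l - of_nat i) (YM u (m + of_nat i) w))))"
  \<comment> \<open>the Jacobi identity is the seventh conjunct of the definition\<close>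
  using module[unfolded is_twisted_module_def Let_def, THEN conjunct2, THEN conjunct2,
      THEN conjunct2, THEN conjunct2, THEN conjunct2, THEN conjunct2, THEN conjunct1, rule_format,
      OF assms] .

lemma YM_L_minus_one:
  assumes "r < aut_order x" "u \<in> eig_part smul x r" "p < 2" "u \<in> par_space smul Y om p"
    and "m - of_nat r / of_nat (aut_order x) \<in> \<int>"
  shows "YM (Y om 0 u) m w = smulM (- of_rat m) (YM u (m - 1) w)"
proof -
  \<comment> \<open>the Jacobi identity with v = vacuum, l = -2, n = 0; only i = 0, 1 survive on the left\<close>
  have "Sum_any (\<lambda>i::nat. smulM ((of_rat m::complex) gchoose i)
                     (YM (Y u (-2 + int i) vac) (m + 0 - of_nat i) w))
        = Sum_any (\<lambda>i::nat. smulM ((-1)^i * ((of_int (-2)::complex) gchoose i))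
            (YM u (m + of_int (-2) - of_nat i) (YM vac (0 + of_nat i) w)
             - smulM ((-1)^(p * 0) * (-1) ^ nat \<bar>-2::int\<bar>) (YM vac (0 + of_int (-2) - of_nat i) (YM u (m + of_nat i) w))))"
    by (rule twisted_Jacobi[OF assms(1,3) _ assms(2,4) vac_par_space assms(5)]) simp
  also have "\<dots> = 0"
    by (simp add: YM_vac linear_map_0[OF linear_YM] flip: of_nat_Suc)
  also have "Sum_any (\<lambda>i::nat. smulM ((of_rat m::complex) gchoose i)
                     (YM (Y u (-2 + int i) vac) (m + 0 - of_nat i) w))
      = (\<Sum>i<2. smulM ((of_rat m::complex) gchoose i) (YM (Y u (-2 + int i) vac) (m - of_nat i) w))"
    unfolding add_0_right
    by (rule Sum_any_nat_lessThan) (simp add: Y_vac linear_map_0[OF linear_YM_left])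
  finally show ?thesis
    by (simp add: numeral_2_eq_2 L_minus_one_eq Y_vac_minus_one M.scale_minus_left eq_neg_iff_add_eq_0)
qed

lemma YM_L0_commutator:
  assumes "x om = om" "0 < aut_order x" "s < 2" "u \<in> par_space smul Y om s"
  shows "YM om 1 (YM u q w) - YM u q (YM om 1 w) = YM (Y om 0 u) (q + 1) w + YM (Y om 1 u) q w"
proof -
  have om_eig: "om \<in> eig_part smul x 0"
    using assms(1) by (simp add: eig_part_def)
  have "Sum_any (\<lambda>i::nat. smulM ((of_rat 1::complex) gchoose i) (YM (Y om (0 + int i) u) (1 + q - of_nat i) w))
      = Sum_any (\<lambda>i::nat. smulM ((-1)^i * ((of_int 0::complex) gchoose i))
          (YM om (1 + of_int 0 - of_nat i) (YM u (q + of_nat i) w)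
           - smulM ((-1)^(0 * s) * (-1) ^ nat \<bar>0::int\<bar>) (YM u (q + of_int 0 - of_nat i) (YM om (1 + of_nat i) w))))"
    by (rule twisted_Jacobi[OF assms(2) _ assms(3) om_eig om_par_space assms(4)]) simp_all
  also have "\<dots> = (\<Sum>i<1. smulM ((-1)^i * ((of_int 0::complex) gchoose i))
          (YM om (1 + of_int 0 - of_nat i) (YM u (q + of_nat i) w)
           - smulM ((-1)^(0 * s) * (-1) ^ nat \<bar>0::int\<bar>) (YM u (q + of_int 0 - of_nat i) (YM om (1 + of_nat i) w))))"
    by (rule Sum_any_nat_lessThan) (simp add: gbinomial_0_left)
  also have "Sum_any (\<lambda>i::nat. smulM ((of_rat 1::complex) gchoose i) (YM (Y om (0 + int i) u) (1 + q - of_nat i) w))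
      = (\<Sum>i<2. smulM ((of_rat 1::complex) gchoose i) (YM (Y om (0 + int i) u) (1 + q - of_nat i) w))"
  proof (rule Sum_any_nat_lessThan)
    fix i :: nat
    assume "2 \<le> i"
    then have "(1::complex) gchoose i = 0"
      using binomial_gbinomial[of 1 i, where 'a = complex] by (simp add: binomial_eq_0)
    then show "smulM ((of_rat 1::complex) gchoose i) (YM (Y om (0 + int i) u) (1 + q - of_nat i) w) = 0"
      by simp
  qed
  finally show ?thesis
    by (simp add: numeral_2_eq_2 add.commute)
qed

lemma YM_L0_eigenvector:
  assumes "x om = om" "r < aut_order x" "u \<in> eig_part smul x r"
    and "u \<in> wt_space smul Y om (of_int k / 2)"
    and "q - of_nat r / of_nat (aut_order x) \<in> \<int>" "YM om 1 w = smulM lam w"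
  shows "YM om 1 (YM u q w) = smulM (lam + of_int k / 2 - of_rat q - 1) (YM u q w)"
proof -
  have "q + 1 - of_nat r / of_nat (aut_order x) = (q - of_nat r / of_nat (aut_order x)) + 1"
    by simp
  then have "q + 1 - of_nat r / of_nat (aut_order x) \<in> \<int>"
    using assms(5) by (metis Ints_1 Ints_add)
  then have L_minus_one: "YM (Y om 0 u) (q + 1) w = smulM (- of_rat (q + 1)) (YM u q w)"
    using YM_L_minus_one[OF assms(2,3) _ wt_space_par_space[OF assms(4)]] by simp
  have L0: "YM (Y om 1 u) q w = smulM (of_int k / 2) (YM u q w)"
    using assms(4) linear_map_scale[OF linear_YM_left] by (simp add: wt_space_def)
  have "YM om 1 (YM u q w) = YM u q (YM om 1 w) + (YM (Y om 0 u) (q + 1) w + YM (Y om 1 u) q w)"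
    using YM_L0_commutator[OF assms(1) _ _ wt_space_par_space[OF assms(4)], of q w] assms(2)
    by (simp add: diff_eq_eq add.commute)
  also have "\<dots> = smulM lam (YM u q w) + smulM (- of_rat (q + 1)) (YM u q w) + smulM (of_int k / 2) (YM u q w)"
    using assms(6) by (simp add: L_minus_one L0 linear_map_scale[OF linear_YM] add.assoc)
  also have "\<dots> = smulM (lam + - of_rat (q + 1) + of_int k / 2) (YM u q w)"
    by (simp only: M.scale_left_distrib)
  also have "lam + - of_rat (q + 1) + of_int k / 2 = lam + of_int k / 2 - of_rat q - (1::complex)"
    by (simp add: of_rat_add)
  finally show ?thesis .
qed

section \<open>The operator e^(2 pi i L(0))\<close>

sublocale L0: diagonalizable_operator smulM "YM om 1"
  by (rule diagonalizable_operator.intro[OF linear_YM span_L0_eigenvectors])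

definition exp_2pi_i_L0 :: "'m \<Rightarrow> 'm"
  where "exp_2pi_i_L0 = L0.spectral_map (\<lambda>lam. exp (2 * of_real pi * \<i> * lam))"

lemma linear_exp_2pi_i_L0: "Vector_Spaces.linear smulM smulM exp_2pi_i_L0"
  unfolding exp_2pi_i_L0_def by (rule L0.linear_spectral_map)

lemma bij_exp_2pi_i_L0: "bij exp_2pi_i_L0"
  unfolding exp_2pi_i_L0_def by (rule L0.bij_spectral_map) simp

lemma exp_2pi_i_L0_YM_eigenvector:
  assumes "x om = om" "r < aut_order x" "u \<in> eig_part smul x r"
    and "u \<in> wt_space smul Y om (of_int k / 2)" and q: "q - of_nat r / of_nat (aut_order x) \<in> \<int>"
    and w: "w \<in> L0.eigenspace lam"
  shows "exp_2pi_i_L0 (YM u q w) = YM (sig (x u)) q (exp_2pi_i_L0 w)"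
proof -
  define c where "c = (if even k then 1 else - 1) * exp (- 2 * of_real pi * \<i> * of_nat r / of_nat (aut_order x))"
  obtain j where "q - of_nat r / of_nat (aut_order x) = of_int j"
    using q by (auto elim: Ints_cases)
  then have "q = of_nat r / of_nat (aut_order x) + of_int j"
    by (simp add: algebra_simps)
  then have "(of_rat q :: complex) = of_nat r / of_nat (aut_order x) + of_int j"
    by (simp add: of_rat_add of_rat_divide)
  then have phase: "exp (2 * of_real pi * \<i> * (lam + of_int k / 2 - of_rat q - 1))
      = exp (2 * of_real pi * \<i> * lam) * c"
    unfolding c_def by (rule exp_two_pi_i_shift)
  have "YM u q w \<in> L0.eigenspace (lam + of_int k / 2 - of_rat q - 1)"
    using YM_L0_eigenvector[OF assms(1-4) q] w by (simp add: L0.eigenspace_def)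
  then have "exp_2pi_i_L0 (YM u q w)
      = smulM (exp (2 * of_real pi * \<i> * (lam + of_int k / 2 - of_rat q - 1))) (YM u q w)"
    unfolding exp_2pi_i_L0_def by (rule L0.spectral_map_eigenvector)
  also have "\<dots> = smulM c (YM u q (smulM (exp (2 * of_real pi * \<i> * lam)) w))"
    unfolding phase by (simp add: linear_map_scale[OF linear_YM] mult.commute)
  also have "\<dots> = YM (sig (x u)) q (exp_2pi_i_L0 w)"
    using L0.spectral_map_eigenvector[OF w] sig_comp_eig_part[OF assms(3,4)]
    by (simp add: exp_2pi_i_L0_def c_def linear_map_scale[OF linear_YM_left])
  finally show ?thesis .
qed

lemma exp_2pi_i_L0_YM_homogeneous:
  assumes "x om = om" "r < aut_order x" "u \<in> eig_part smul x r"
    and "u \<in> wt_space smul Y om (of_int k / 2)"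
  shows "exp_2pi_i_L0 (YM u q w) = YM (sig (x u)) q (exp_2pi_i_L0 w)"
proof (cases "q - of_nat r / of_nat (aut_order x) \<in> \<int>")
  case False
  have "YM (sig (x u)) q w' = 0" for w'
    using YM_eig_part_vanish[OF assms(2,3) False] sig_comp_eig_part[OF assms(3,4)]
    by (simp add: linear_map_scale[OF linear_YM_left])
  then show ?thesis
    using YM_eig_part_vanish[OF assms(2,3) False] linear_map_0[OF linear_exp_2pi_i_L0] by simp
next
  case True
  interpret vector_space_pair smulM smulM ..
  show ?thesis
  proof (rule linear_eq_on[of _ _ w "\<Union>lam. L0.eigenspace lam"])
    show "Vector_Spaces.linear smulM smulM (\<lambda>w. exp_2pi_i_L0 (YM u q w))"
      and "Vector_Spaces.linear smulM smulM (\<lambda>w. YM (sig (x u)) q (exp_2pi_i_L0 w))"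
      using Vector_Spaces.linear_compose[OF linear_YM linear_exp_2pi_i_L0]
        Vector_Spaces.linear_compose[OF linear_exp_2pi_i_L0 linear_YM] by (simp_all add: o_def)
    show "w \<in> M.span (\<Union>lam. L0.eigenspace lam)"
      using L0.span_eigenspaces by simp
  qed (auto intro: exp_2pi_i_L0_YM_eigenvector[OF assms True])
qed

lemma exp_2pi_i_L0_YM:
  assumes "Vector_Spaces.linear smul smul x" "finite_order x" "x om = om"
    and "\<And>k u. u \<in> wt_space smul Y om (of_int k / 2) \<Longrightarrow> x u \<in> wt_space smul Y om (of_int k / 2)"
  shows "exp_2pi_i_L0 (YM u q w) = YM (sig (x u)) q (exp_2pi_i_L0 w)"
proof -
  interpret vector_space_pair smul smulM ..
  show ?thesis
  proof (rule linear_eq_on[of _ _ u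
        "{u. \<exists>k r. r < aut_order x \<and> u \<in> wt_space smul Y om (of_int k / 2) \<and> u \<in> eig_part smul x r}"])
    show "Vector_Spaces.linear smul smulM (\<lambda>u. exp_2pi_i_L0 (YM u q w))"
      using Vector_Spaces.linear_compose[OF linear_YM_left linear_exp_2pi_i_L0] by (simp add: o_def)
    show "Vector_Spaces.linear smul smulM (\<lambda>u. YM (sig (x u)) q (exp_2pi_i_L0 w))"
      using Vector_Spaces.linear_compose[OF Vector_Spaces.linear_compose[OF assms(1) linear_sig] linear_YM_left]
      by (simp add: o_def)
    show "u \<in> V.span {u. \<exists>k r. r < aut_order x \<and> u \<in> wt_space smul Y om (of_int k / 2) \<and> u \<in> eig_part smul x r}"
      using span_homogeneous_eig_parts[OF assms(1,2,4)] by simp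
  qed (auto intro: exp_2pi_i_L0_YM_homogeneous[OF assms(3)])
qed

theorem module_iso_comp_sig_twist:
  assumes "Vector_Spaces.linear smul smul x" "finite_order x" "x om = om"
    and "\<And>k u. u \<in> wt_space smul Y om (of_int k / 2) \<Longrightarrow> x u \<in> wt_space smul Y om (of_int k / 2)"
  shows "module_iso smulM (comp_module (sig \<circ> x) YM) YM"
proof -
  have "surj (sig \<circ> x)"
    by (rule comp_surj[OF surj_finite_order[OF assms(2)] surjI[of sig sig, OF sig_sig]])
  then have "exp_2pi_i_L0 (YM (inv (sig \<circ> x) v) q w) = YM v q (exp_2pi_i_L0 w)" for v q w
    using exp_2pi_i_L0_YM[OF assms] surj_f_inv_f by (metis comp_apply)
  then show ?thesis
    unfolding module_iso_def comp_module_def using linear_exp_2pi_i_L0 bij_exp_2pi_i_L0 by blast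
qed

corollary module_iso_comp_aut:
  assumes g: "is_aut smul Y vac om g" "finite_order g" and x: "x = g \<circ> sig"
  shows "module_iso smulM (comp_module g YM) YM"
proof -
  have "module_iso smulM (comp_module (sig \<circ> (g \<circ> sig)) YM) YM"
    unfolding x
  proof (rule module_iso_comp_sig_twist[unfolded x])
    show "Vector_Spaces.linear smul smul (g \<circ> sig)"
      using g(1) Vector_Spaces.linear_compose[OF linear_sig] unfolding is_aut_def by blast
    show "finite_order (g \<circ> sig)"
      using finite_order_comp_sig[OF g] .
    show "(g \<circ> sig) om = om"
      using g(1) sig_om by (simp add: is_aut_def)
    show "(g \<circ> sig) u \<in> wt_space smul Y om (of_int k / 2)"
      if "u \<in> wt_space smul Y om (of_int k / 2)" for k u
      using that by (simp add: sig_preserves_wt_space aut_wt_space[OF g(1)])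
  qed
  moreover have "sig \<circ> (g \<circ> sig) = g"
    using aut_commute_sig[OF g(1)] sig_sig by (simp add: fun_eq_iff)
  ultimately show ?thesis by simp
qed

corollary module_iso_comp_sig:
  assumes "x = id"
  shows "module_iso smulM (comp_module sig YM) YM"
proof -
  have "finite_order x"
    unfolding finite_order_def assms by (rule exI[of _ 1]) simp
  then show ?thesis
    using module_iso_comp_sig_twist[unfolded assms] by (simp add: assms V.linear_id)
qed

end

theorem lemma6p1:
  fixes smul :: "complex \<Rightarrow> 'v::ab_group_add \<Rightarrow> 'v"
    and Y :: "'v \<Rightarrow> int \<Rightarrow> 'v \<Rightarrow> 'v" and vac om :: 'v and sig :: "'v \<Rightarrow> 'v"
  assumes "is_VOSA smul Y vac om"
    and "is_parity_aut smul Y om sig"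
  shows "(\<forall>g (smulM :: complex \<Rightarrow> 'm::ab_group_add \<Rightarrow> 'm) (YM :: 'v \<Rightarrow> rat \<Rightarrow> 'm \<Rightarrow> 'm).
            is_aut smul Y vac om g \<and> finite_order g \<and>
            is_twisted_module smul Y vac om sig (g \<circ> sig) smulM YM \<and> simple_module smulM YM
            \<longrightarrow> module_iso smulM (comp_module g YM) YM)
       \<and> (\<forall>(smulM :: complex \<Rightarrow> 'm::ab_group_add \<Rightarrow> 'm) (YM :: 'v \<Rightarrow> rat \<Rightarrow> 'm \<Rightarrow> 'm).
            is_twisted_module smul Y vac om sig id smulM YM \<and> simple_module smulM YM
            \<longrightarrow> module_iso smulM (comp_module sig YM) YM)"
proof -
  interpret vosa_parity smul Y vac om sig
    using assms by (intro vosa_parity.intro vosa.intro vosa_parity_axioms.intro)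
  have "module_iso smulM (comp_module g YM) YM"
    if "is_aut smul Y vac om g" "finite_order g"
      and "is_twisted_module smul Y vac om sig (g \<circ> sig) smulM YM"
    for g and smulM :: "complex \<Rightarrow> 'm::ab_group_add \<Rightarrow> 'm" and YM
  proof -
    interpret twisted_module smul Y vac om sig "g \<circ> sig" smulM YM
      using that(3) by (intro twisted_module.intro twisted_module_axioms.intro vosa_parity_axioms)
    show ?thesis using that(1,2) by (rule module_iso_comp_aut) simp
  qed
  moreover have "module_iso smulM (comp_module sig YM) YM"
    if "is_twisted_module smul Y vac om sig id smulM YM"
    for smulM :: "complex \<Rightarrow> 'm::ab_group_add \<Rightarrow> 'm" and YM
  proof -
    interpret twisted_module smul Y vac om sig id smulM YM
      using that by (intro twisted_module.intro twisted_module_axioms.intro vosa_parity_axioms)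
    show ?thesis by (rule module_iso_comp_sig) simp
  qed
  ultimately show ?thesis by blast
qed

end
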